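(* $\beta(3,13,4) = 7$.
   Context: For integers $v \ge k \ge 2$, a $(v,k)$-packing is a pair $(X,\mathcal{B})$ where $X$ is a set of $v$ points and $\mathcal{B}$ is a set of $k$-subsets of $X$ (blocks) such that every pair of distinct points lies in at most one block. A partial parallel class (PPC) is a set of pairwise disjoint blocks; its size is the number of blocks. A PPC of size $\rho$ is maximum if the packing has no PPC of size $\rho+1$. $\beta(\rho,v,k)$ denotes the maximum number of blocks in a $(v,k)$-packing in which the maximum PPC has size $\rho$. *)

theory Defs
  imports Main
begin

definition packing :: "'a set \<Rightarrow> nat \<Rightarrow> nat \<Rightarrow> 'a set set \<Rightarrow> bool" where
  "packing X v k \<B> \<longleftrightarrow> finite X \<and> card X = v \<and>
     (\<forall>b\<in>\<B>. b \<subseteq> X \<and> card b = k) \<and>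
     (\<forall>x y. x \<noteq> y \<longrightarrow> card {b\<in>\<B>. x \<in> b \<and> y \<in> b} \<le> 1)"

definition ppc :: "'a set set \<Rightarrow> 'a set set \<Rightarrow> bool" where
  "ppc \<B> P \<longleftrightarrow> P \<subseteq> \<B> \<and> pairwise disjnt P"

definition max_ppc_size :: "'a set set \<Rightarrow> nat \<Rightarrow> bool" where
  "max_ppc_size \<B> \<rho> \<longleftrightarrow> (\<exists>P. ppc \<B> P \<and> finite P \<and> card P = \<rho>) \<and>
     \<not> (\<exists>P. ppc \<B> P \<and> finite P \<and> card P = \<rho> + 1)"

definition beta :: "nat \<Rightarrow> nat \<Rightarrow> nat \<Rightarrow> nat" where
  "beta \<rho> v k = Max {card \<B> | \<B>. packing {..<v} v k \<B> \<and> max_ppc_size \<B> \<rho>}"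

end

theory Submission
  imports Defs
begin

text \<open>
  A PPC of three blocks covers 12 of the 13 points and misses a single point w. Any other block
  meets each block of the PPC in at most one point; having four points, it must therefore contain w
  and meet every block of the PPC. Blocks through w share no further point, so their traces on a
  fixed block of the PPC are distinct points of it: besides the PPC there are at most four blocks.
  Conversely, the three rows of a 3 x 4 grid, together with its four columns each extended by the
  13th point, form a packing with 7 blocks in which no four blocks are disjoint, since 16 > 13.
\<close>

lemma packing_pointsD:
  assumes "packing X v k \<B>"
  shows "finite X" "card X = v"
  using assms by (simp_all add: packing_def)

lemma packing_blockD:
  assumes "packing X v k \<B>" "b \<in> \<B>"
  shows "b \<subseteq> X" "card b = k" "finite b"
proof -
  show "b \<subseteq> X" "card b = k"
    using assms by (simp_all add: packing_def)
  show "finite b"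
    using \<open>b \<subseteq> X\<close> packing_pointsD(1)[OF assms(1)] by (rule finite_subset)
qed

lemma packing_finite:
  assumes "packing X v k \<B>"
  shows "finite \<B>"
proof (rule finite_subset)
  show "\<B> \<subseteq> Pow X"
    using packing_blockD(1)[OF assms] by blast
  show "finite (Pow X)"
    using packing_pointsD(1)[OF assms] by simp
qed

lemma ppc_finite: "packing X v k \<B> \<Longrightarrow> ppc \<B> P \<Longrightarrow> finite P"
  unfolding ppc_def using packing_finite finite_subset by blast

lemma packing_block_eq:
  assumes "packing X v k \<B>" "b \<in> \<B>" "b' \<in> \<B>" "x \<noteq> y" "{x, y} \<subseteq> b" "{x, y} \<subseteq> b'"
  shows "b = b'"
proof -
  have "finite {c\<in>\<B>. x \<in> c \<and> y \<in> c}"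
    using packing_finite[OF assms(1)] by simp
  moreover have "card {c\<in>\<B>. x \<in> c \<and> y \<in> c} \<le> 1"
    using assms(1,4) by (simp add: packing_def)
  ultimately show ?thesis
    using assms(2,3,5,6) by (auto simp: card_le_Suc0_iff_eq)
qed

lemma packing_card_Int_le_1:
  assumes "packing X v k \<B>" "b \<in> \<B>" "b' \<in> \<B>" "b \<noteq> b'"
  shows "card (b \<inter> b') \<le> 1"
proof -
  have "finite (b \<inter> b')"
    using packing_blockD(3)[OF assms(1,2)] by simp
  then show ?thesis
    using packing_block_eq[OF assms(1-3)] assms(4) by (auto simp: card_le_Suc0_iff_eq)
qed

lemma packingI:
  assumes "finite X" "card X = v" "\<forall>b\<in>\<B>. b \<subseteq> X \<and> card b = k"
    and "pairwise (\<lambda>b b'. card (b \<inter> b') \<le> 1) \<B>"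
  shows "packing X v k \<B>"
  unfolding packing_def
proof (intro conjI allI impI)
  fix x y :: 'a
  assume "x \<noteq> y"
  have "finite {b\<in>\<B>. x \<in> b \<and> y \<in> b}"
    by (rule finite_subset[of _ "Pow X"]) (use assms(1,3) in auto)
  moreover have "b = b'" if "b \<in> \<B>" "b' \<in> \<B>" "{x, y} \<subseteq> b \<inter> b'" for b b'
  proof (rule ccontr)
    assume "b \<noteq> b'"
    have "finite (b \<inter> b')"
      using assms(1,3) that(1) by (meson finite_Int finite_subset)
    then have "card {x, y} \<le> card (b \<inter> b')"
      using that(3) by (rule card_mono)
    with \<open>x \<noteq> y\<close> \<open>b \<noteq> b'\<close> assms(4) that(1,2) show False
      unfolding pairwise_def by fastforce
  qed
  ultimately show "card {b\<in>\<B>. x \<in> b \<and> y \<in> b} \<le> 1"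
    by (auto simp: card_le_Suc0_iff_eq)
qed (use assms in auto)

lemma card_Union_ppc:
  assumes "packing X v k \<B>" "ppc \<B> P"
  shows "card (\<Union>P) = k * card P"
proof -
  have "P \<subseteq> \<B>" "pairwise disjnt P"
    using assms(2) unfolding ppc_def by blast+
  then have "card (\<Union>P) = sum card P"
    using packing_blockD(3)[OF assms(1)] by (intro card_Union_disjoint) blast+
  also have "\<dots> = k * card P"
    using packing_blockD(2)[OF assms(1)] \<open>P \<subseteq> \<B>\<close> by (simp add: subset_iff)
  finally show ?thesis .
qed

lemma ppc_card_le:
  assumes "packing X v k \<B>" "ppc \<B> P"
  shows "k * card P \<le> v"
proof -
  have "\<Union>P \<subseteq> X"
    using assms(2) packing_blockD(1)[OF assms(1)] unfolding ppc_def by blast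
  then show ?thesis
    using card_mono[OF packing_pointsD(1)[OF assms(1)]] packing_pointsD(2)[OF assms(1)]
      card_Union_ppc[OF assms] by metis
qed

lemma card_blocks_through_point_meeting_block_le:
  assumes "packing X v k \<B>" "A \<in> \<B>" "w \<notin> A" "\<D> \<subseteq> \<B>"
    and "\<forall>C\<in>\<D>. w \<in> C \<and> C \<inter> A \<noteq> {}"
  shows "card \<D> \<le> k"
proof -
  define trace where "trace C = (SOME a. a \<in> C \<inter> A)" for C
  have trace: "trace C \<in> C \<inter> A" if "C \<in> \<D>" for C
    unfolding trace_def by (rule someI_ex) (use assms(5) that in blast)
  have "inj_on trace \<D>"
  proof (rule inj_onI)
    fix C C' assume C: "C \<in> \<D>" and C': "C' \<in> \<D>" and same_trace: "trace C = trace C'"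
    have "trace C \<noteq> w"
      using trace[OF C] assms(3) by blast
    moreover have "{trace C, w} \<subseteq> C"
      using trace[OF C] assms(5) C by blast
    moreover have "{trace C, w} \<subseteq> C'"
      using trace[OF C'] assms(5) C' unfolding same_trace by blast
    ultimately show "C = C'"
      using packing_block_eq[OF assms(1)] C C' assms(4) by (meson subsetD)
  qed
  moreover have "trace ` \<D> \<subseteq> A"
    using trace by blast
  ultimately have "card \<D> \<le> card A"
    using packing_blockD(3)[OF assms(1,2)] by (rule card_inj_on_le)
  then show ?thesis
    using packing_blockD(2)[OF assms(1,2)] by simp
qed

lemma block_outside_ppc_meets_all:
  assumes pk: "packing X v k \<B>" and P: "ppc \<B> P" "card P + 1 = k"
    and w: "X - \<Union>P = {w}" and C: "C \<in> \<B>" "C \<notin> P"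
  shows "w \<in> C \<and> (\<forall>A\<in>P. C \<inter> A \<noteq> {})"
proof -
  \<comment> \<open>The k sets of \<open>\<Q>\<close> cover C and each contains at most one point of C, so each contains exactly one.\<close>
  define \<Q> where "\<Q> = insert {w} P"
  have "{w} \<notin> P"
    using w by blast
  then have "finite \<Q>" "card \<Q> = k"
    using ppc_finite[OF pk P(1)] P(2) unfolding \<Q>_def by simp_all
  have C_split: "C = (\<Union>D\<in>\<Q>. C \<inter> D)"
    using packing_blockD(1)[OF pk C(1)] w unfolding \<Q>_def by blast
  have at_most_one: "card (C \<inter> D) \<le> 1" if "D \<in> \<Q>" for D
  proof (cases "D = {w}")
    case True
    then show ?thesis
      by (simp add: card_le_Suc0_iff_eq)
  next
    case False
    with that C have "D \<in> \<B>" "C \<noteq> D"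
      using P(1) unfolding \<Q>_def ppc_def by auto
    then show ?thesis
      using packing_card_Int_le_1[OF pk C(1)] by blast
  qed
  have meets: "C \<inter> D\<^sub>0 \<noteq> {}" if "D\<^sub>0 \<in> \<Q>" for D\<^sub>0
  proof
    assume empty: "C \<inter> D\<^sub>0 = {}"
    have "k = card (\<Union>D\<in>\<Q>. C \<inter> D)"
      using packing_blockD(2)[OF pk C(1)] C_split by simp
    also have "\<dots> \<le> (\<Sum>D\<in>\<Q>. card (C \<inter> D))"
      using \<open>finite \<Q>\<close> by (rule card_UN_le)
    also have "\<dots> = (\<Sum>D\<in>\<Q> - {D\<^sub>0}. card (C \<inter> D))"
      using sum.remove[OF \<open>finite \<Q>\<close> that, of "\<lambda>D. card (C \<inter> D)"] empty by simp
    also have "\<dots> \<le> (\<Sum>D\<in>\<Q> - {D\<^sub>0}. 1)"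
      using at_most_one by (intro sum_mono) simp
    also have "\<dots> = card (\<Q> - {D\<^sub>0})"
      by simp
    also have "\<dots> < k"
      using card_Diff1_less[OF \<open>finite \<Q>\<close> that] \<open>card \<Q> = k\<close> by simp
    finally show False
      by simp
  qed
  have "C \<inter> {w} \<noteq> {}"
    using meets[of "{w}"] unfolding \<Q>_def by simp
  moreover have "\<forall>A\<in>P. C \<inter> A \<noteq> {}"
    using meets unfolding \<Q>_def by simp
  ultimately show ?thesis
    by blast
qed

lemma card_packing_le_if_ppc_misses_one_point:
  assumes pk: "packing X v k \<B>" and P: "ppc \<B> P" "P \<noteq> {}" "card P + 1 = k"
    and v: "v = k * card P + 1"
  shows "card \<B> \<le> card P + k"
proof -
  have "P \<subseteq> \<B>"
    using P(1) unfolding ppc_def by blast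
  have "\<Union>P \<subseteq> X"
    using \<open>P \<subseteq> \<B>\<close> packing_blockD(1)[OF pk] by blast
  then have "card (X - \<Union>P) = 1"
    using card_Diff_subset[of "\<Union>P" X] card_Union_ppc[OF pk P(1)] packing_pointsD[OF pk] v
    by (simp add: finite_subset)
  then obtain w where w: "X - \<Union>P = {w}"
    by (rule card_1_singletonE)
  obtain A where "A \<in> P"
    using P(2) by blast
  have "card (\<B> - P) \<le> k"
  proof (rule card_blocks_through_point_meeting_block_le[OF pk])
    show "A \<in> \<B>" "w \<notin> A"
      using \<open>A \<in> P\<close> \<open>P \<subseteq> \<B>\<close> w by auto
    show "\<forall>C\<in>\<B> - P. w \<in> C \<and> C \<inter> A \<noteq> {}"
      using block_outside_ppc_meets_all[OF pk P(1,3) w] \<open>A \<in> P\<close> by blast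
  qed simp
  moreover have "card \<B> = card P + card (\<B> - P)"
    using card_Diff_subset[OF ppc_finite[OF pk P(1)] \<open>P \<subseteq> \<B>\<close>]
      card_mono[OF packing_finite[OF pk] \<open>P \<subseteq> \<B>\<close>] by simp
  ultimately show ?thesis
    by simp
qed

definition grid_packing :: "nat set set" where
  "grid_packing = {{0,1,2,3}, {4,5,6,7}, {8,9,10,11},
     {12,0,4,8}, {12,1,5,9}, {12,2,6,10}, {12,3,7,11}}"

lemma packing_grid_packing: "packing {..<13} 13 4 grid_packing"
  by (rule packingI) (simp_all add: grid_packing_def pairwise_def)

lemma card_grid_packing: "card grid_packing = 7"
  unfolding grid_packing_def by code_simp

lemma max_ppc_size_grid_packing: "max_ppc_size grid_packing 3"
  unfolding max_ppc_size_def
proof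
  let ?rows = "{{0,1,2,3}, {4,5,6,7}, {8,9,10,11}} :: nat set set"
  have "ppc grid_packing ?rows"
    unfolding ppc_def grid_packing_def by (auto simp: pairwise_insert disjnt_def)
  moreover have "card ?rows = 3"
    by code_simp
  ultimately show "\<exists>P. ppc grid_packing P \<and> finite P \<and> card P = 3"
    by blast
  show "\<nexists>P. ppc grid_packing P \<and> finite P \<and> card P = 3 + 1"
    using ppc_card_le[OF packing_grid_packing] by fastforce
qed

theorem theorem4p8:
  shows "beta 3 13 4 = 7"
  unfolding beta_def
proof (rule Max_eqI)
  let ?S = "{card \<B> | \<B>. packing {..<13::nat} 13 4 \<B> \<and> max_ppc_size \<B> 3}"
  show "y \<le> 7" if y: "y \<in> ?S" for y
  proof -
    obtain \<B> where "y = card \<B>" "packing {..<13::nat} 13 4 \<B>" "max_ppc_size \<B> 3"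
      using y by blast
    moreover obtain P where "ppc \<B> P" "card P = 3"
      using \<open>max_ppc_size \<B> 3\<close> unfolding max_ppc_size_def by blast
    ultimately show ?thesis
      using card_packing_le_if_ppc_misses_one_point[of "{..<13}" 13 4 \<B> P] by fastforce
  qed
  then show "finite ?S"
    by (meson finite_nat_set_iff_bounded_le)
  show "7 \<in> ?S"
    using packing_grid_packing max_ppc_size_grid_packing card_grid_packing[symmetric] by blast
qed

end
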